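(* Let $n=n_{obs}+n_{mis}$ with $n_{obs}\ge2$, $n_{mis}\ge1$, and let $D\ge2$. Let $Y_1,\dots,Y_{n_{obs}}$ be i.i.d. $N(\mu,\sigma^2)$, with $\bar Y_{obs}$ their mean and $CSS=\sum_{i=1}^{n_{obs}}(Y_i-\bar Y_{obs})^2$. Fix a real $\nu_{prior}$ with $n_{obs}+\nu_{prior}>3$ and set $\nu_{PD}=\nu_{prior}+n_{obs}-1$. For each $d=1,\dots,D$, independently, draw $U_{PD,d}\sim\chi^2_{\nu_{PD}}$ and $Z_{PD,d}\sim N(0,1/n_{obs})$, set $\hat\sigma^2_{d}=CSS/U_{PD,d}$, $\hat\mu_d=\bar Y_{obs}+\hat\sigma_d Z_{PD,d}$, draw $Y_{imp,i,d}=\hat\mu_d+\hat\sigma_d Z_{imp,i,d}$ for $i=n_{obs}+1,\dots,n$ with $Z_{imp,i,d}$ i.i.d. $N(0,1)$ (all random variables independent of each other and of the data), and let $\hat\mu_{SI,d}$ and $\hat\sigma^2_{SI,d}$ be the sample mean and sample variance (divisor $n-1$) of the $n$ values $Y_1,\dots,Y_{n_{obs}},Y_{imp,n_{obs}+1,d},\dots,Y_{imp,n,d}$. Let $\hat\mu_{MI,PD}=\frac1D\sum_d\hat\mu_{SI,d}$, $\hat\sigma^2_{MI,PD}=\frac1D\sum_d\hat\sigma^2_{SI,d}$, and define Rubin's variance estimate $$\hat V(\hat\mu_{MI,PD})=\frac{\hat\sigma^2_{MI,PD}}{n}+\frac{D+1}{D(D-1)}\sum_{d=1}^D(\hat\mu_{SI,d}-\hat\mu_{MI,PD})^2.$$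 Then $$E\big(\hat V(\hat\mu_{MI,PD})\big)-\operatorname{Var}(\hat\mu_{MI,PD})=-\sigma^2\frac{n_{mis}(n+n_{obs}-1)(\nu_{prior}-2)}{(n-1)n\,n_{obs}(n_{obs}+\nu_{prior}-3)}=\frac{n+n_{obs}-1}{n\,n_{obs}}\Big(E(\hat\sigma^2_{MI,PD})-\sigma^2\Big).$$ In particular $\hat V(\hat\mu_{MI,PD})$ is unbiased for $\operatorname{Var}(\hat\mu_{MI,PD})$ if and only if $\nu_{prior}=2$. *)

theory Defs
  imports "HOL-Probability.Probability"
begin

definition chi_squared_density :: "real \<Rightarrow> real \<Rightarrow> real" where
  "chi_squared_density k x =
     (if x > 0 then x powr (k / 2 - 1) * exp (- x / 2) / (2 powr (k / 2) * Gamma (k / 2)) else 0)"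

text \<open>Labels of all primitive random variables (0-based indices):
  Yobs i (i < n_obs): observed data; Uchi d, ZPD d (d < D): posterior draws;
  Zimp i d (n_obs \<le> i < n, d < D): imputation noise.\<close>
datatype rv_label = Yobs nat | Uchi nat | ZPD nat | Zimp nat nat

definition rv_index :: "nat \<Rightarrow> nat \<Rightarrow> nat \<Rightarrow> rv_label set" where
  "rv_index nobs nmis D =
     {Yobs i | i. i < nobs} \<union> {Uchi d | d. d < D} \<union> {ZPD d | d. d < D} \<union>
     {Zimp i d | i d. nobs \<le> i \<and> i < nobs + nmis \<and> d < D}"

definition Ybar_obs :: "(rv_label \<Rightarrow> 'a \<Rightarrow> real) \<Rightarrow> nat \<Rightarrow> 'a \<Rightarrow> real" where
  "Ybar_obs X nobs \<omega> = (\<Sum>i<nobs. X (Yobs i) \<omega>) / real nobs"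

definition CSS :: "(rv_label \<Rightarrow> 'a \<Rightarrow> real) \<Rightarrow> nat \<Rightarrow> 'a \<Rightarrow> real" where
  "CSS X nobs \<omega> = (\<Sum>i<nobs. (X (Yobs i) \<omega> - Ybar_obs X nobs \<omega>)\<^sup>2)"

definition sigma2_hat :: "(rv_label \<Rightarrow> 'a \<Rightarrow> real) \<Rightarrow> nat \<Rightarrow> nat \<Rightarrow> 'a \<Rightarrow> real" where
  "sigma2_hat X nobs d \<omega> = CSS X nobs \<omega> / X (Uchi d) \<omega>"

definition mu_hat :: "(rv_label \<Rightarrow> 'a \<Rightarrow> real) \<Rightarrow> nat \<Rightarrow> nat \<Rightarrow> 'a \<Rightarrow> real" where
  "mu_hat X nobs d \<omega> = Ybar_obs X nobs \<omega> + sqrt (sigma2_hat X nobs d \<omega>) * X (ZPD d) \<omega>"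

definition Y_imp :: "(rv_label \<Rightarrow> 'a \<Rightarrow> real) \<Rightarrow> nat \<Rightarrow> nat \<Rightarrow> nat \<Rightarrow> 'a \<Rightarrow> real" where
  "Y_imp X nobs i d \<omega> = mu_hat X nobs d \<omega> + sqrt (sigma2_hat X nobs d \<omega>) * X (Zimp i d) \<omega>"

definition Y_comp :: "(rv_label \<Rightarrow> 'a \<Rightarrow> real) \<Rightarrow> nat \<Rightarrow> nat \<Rightarrow> nat \<Rightarrow> 'a \<Rightarrow> real" where
  "Y_comp X nobs i d \<omega> = (if i < nobs then X (Yobs i) \<omega> else Y_imp X nobs i d \<omega>)"

definition mu_SI :: "(rv_label \<Rightarrow> 'a \<Rightarrow> real) \<Rightarrow> nat \<Rightarrow> nat \<Rightarrow> nat \<Rightarrow> 'a \<Rightarrow> real" where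
  "mu_SI X nobs nmis d \<omega> = (\<Sum>i<nobs + nmis. Y_comp X nobs i d \<omega>) / real (nobs + nmis)"

definition sigma2_SI :: "(rv_label \<Rightarrow> 'a \<Rightarrow> real) \<Rightarrow> nat \<Rightarrow> nat \<Rightarrow> nat \<Rightarrow> 'a \<Rightarrow> real" where
  "sigma2_SI X nobs nmis d \<omega> =
     (\<Sum>i<nobs + nmis. (Y_comp X nobs i d \<omega> - mu_SI X nobs nmis d \<omega>)\<^sup>2) / (real (nobs + nmis) - 1)"

definition mu_MI :: "(rv_label \<Rightarrow> 'a \<Rightarrow> real) \<Rightarrow> nat \<Rightarrow> nat \<Rightarrow> nat \<Rightarrow> 'a \<Rightarrow> real" where
  "mu_MI X nobs nmis D \<omega> = (\<Sum>d<D. mu_SI X nobs nmis d \<omega>) / real D"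

definition sigma2_MI :: "(rv_label \<Rightarrow> 'a \<Rightarrow> real) \<Rightarrow> nat \<Rightarrow> nat \<Rightarrow> nat \<Rightarrow> 'a \<Rightarrow> real" where
  "sigma2_MI X nobs nmis D \<omega> = (\<Sum>d<D. sigma2_SI X nobs nmis d \<omega>) / real D"

definition V_Rubin :: "(rv_label \<Rightarrow> 'a \<Rightarrow> real) \<Rightarrow> nat \<Rightarrow> nat \<Rightarrow> nat \<Rightarrow> 'a \<Rightarrow> real" where
  "V_Rubin X nobs nmis D \<omega> =
     sigma2_MI X nobs nmis D \<omega> / real (nobs + nmis)
     + (real D + 1) / (real D * (real D - 1)) *
       (\<Sum>d<D. (mu_SI X nobs nmis d \<omega> - mu_MI X nobs nmis D \<omega>)\<^sup>2)"

end

theory Submission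
  imports Defs
begin

text \<open>The \<open>d\<close>-th completed data set consists of the observed values and the imputations
  \<open>mu_hat_d + sigma_d * Zimp i d\<close>, where \<open>mu_hat_d = Ybar_obs + sigma_d * ZPD d\<close>. Hence its mean is
  \<open>Ybar_obs + sigma_d * W_d\<close>, where \<open>W_d\<close> averages the standardised imputation noise over all \<open>n\<close>
  positions (\<open>ZPD d\<close> entering once per missing value), and its sample variance is
  \<open>(CSS + sigma_d\<^sup>2 * R_d - n * (sigma_d * W_d)\<^sup>2) / (n - 1)\<close> with \<open>R_d = \<Sum>\<^sub>i (ZPD d + Zimp i d)\<^sup>2\<close>.
  The data, each \<open>sigma_d\<close> and each pair \<open>(W_d, R_d)\<close> are functions of disjoint groups of
  independent variables, so all cross terms factorise and every expectation reduces to
  \<open>E CSS = (nobs - 1) \<sigma>\<^sup>2\<close>, \<open>E (1 / U) = 1 / (\<nu>PD - 2)\<close>, \<open>E W_d\<^sup>2 = nmis / (nobs * n)\<close> and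
  \<open>E R_d = nmis * (1 + 1 / nobs)\<close>. The between-imputation part of Rubin's estimate is then exactly
  unbiased for the variance contributed by the shifts \<open>sigma_d * W_d\<close>, so the bias is
  \<open>E sigma2_SI / n + E (sigma_d * W_d)\<^sup>2 - \<sigma>\<^sup>2 / nobs\<close>, which is proportional to \<open>\<nu>prior - 2\<close>.\<close>

section \<open>Chi-squared densities\<close>

lemma chi_squared_density_nonneg: "k > 0 \<Longrightarrow> chi_squared_density k x \<ge> 0"
  by (simp add: chi_squared_density_def)

lemma chi_squared_density_eq_kernel:
  "chi_squared_density k x =
     indicator {0..} x * x powr (k / 2 - 1) * exp (- x / 2) / (2 powr (k / 2) * Gamma (k / 2))"
  by (cases "x = 0") (auto simp: chi_squared_density_def indicator_def)

lemma borel_measurable_chi_squared_density [measurable]: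
  "chi_squared_density k \<in> borel_measurable borel"
  unfolding chi_squared_density_eq_kernel[abs_def] by measurable

lemma nn_integral_chi_squared_density:
  assumes k: "k > 0"
  shows "(\<integral>\<^sup>+x. ennreal (chi_squared_density k x) \<partial>lborel) = 1"
proof -
  define a where "a = k / 2"
  define C where "C = 2 powr a * Gamma a"
  have a: "a > 0" using k by (simp add: a_def)
  have C: "C > 0" using a by (simp add: C_def)
  let ?f = "\<lambda>x. ennreal (chi_squared_density k x)"
  have scaled: "?f (0 + 2 * t) = ennreal (2 powr (a - 1) / C) * ennreal (indicator {0..} t * t powr (a - 1) / exp t)"
    for t
    using C by (cases "t \<ge> 0")
      (auto simp: chi_squared_density_def indicator_def a_def C_def powr_mult exp_minus
         ennreal_mult'[symmetric] field_simps)
  have "(\<integral>\<^sup>+x. ?f x \<partial>lborel) = ennreal \<bar>2\<bar> * (\<integral>\<^sup>+t. ?f (0 + 2 * t) \<partial>lborel)"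
    by (rule nn_integral_real_affine) auto
  also have "\<dots> = 2 * (ennreal (2 powr (a - 1) / C) * Gamma a)"
    unfolding scaled Gamma_conv_nn_integral_real[OF a]
    by (subst nn_integral_cmult) auto
  also have "\<dots> = ennreal (2 * (2 powr (a - 1) / C * Gamma a))"
    using a C by (simp add: ennreal_mult'[symmetric] numeral_mult_ennreal less_imp_le)
  also have "2 * (2 powr (a - 1) / C * Gamma a) = 1"
    using Gamma_real_pos[OF a] by (simp add: C_def powr_diff)
  finally show ?thesis by simp
qed

lemma has_bochner_integral_chi_squared_density:
  assumes "k > 0"
  shows "has_bochner_integral lborel (chi_squared_density k) 1"
  using assms nn_integral_chi_squared_density[OF assms]
  by (intro has_bochner_integral_nn_integral)
     (auto simp: chi_squared_density_eq_kernel chi_squared_density_nonneg)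

lemma chi_squared_density_mult_inverse:
  assumes "k > 2"
  shows "chi_squared_density k x * \<bar>1 / x\<bar> = chi_squared_density (k - 2) x / (k - 2)"
proof (cases "x > 0")
  case True
  define b where "b = k / 2 - 1"
  have b: "b > 0" using assms by (simp add: b_def)
  have k: "k / 2 = b + 1" "k / 2 - 1 = b" "(k - 2) / 2 = b" "(k - 2) / 2 - 1 = b - 1" "k - 2 = 2 * b"
    by (simp_all add: b_def field_simps)
  have "x powr b = x * x powr (b - 1)" using True by (simp add: powr_diff)
  moreover have "Gamma (b + 1) = b * Gamma b" using b by (intro Gamma_plus1) (auto elim: nonpos_Ints_cases)
  ultimately show ?thesis
    using True b unfolding chi_squared_density_def k by (simp add: powr_add field_simps)
qed (simp add: chi_squared_density_def)

lemma has_bochner_integral_chi_squared_inverse: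
  assumes "k > 2"
  shows "has_bochner_integral lborel (\<lambda>x. chi_squared_density k x * \<bar>1 / x\<bar>) (1 / (k - 2))"
  unfolding chi_squared_density_mult_inverse[OF assms]
  using has_bochner_integral_divide_zero[OF has_bochner_integral_chi_squared_density, of "k - 2" "k - 2"]
    assms by simp

section \<open>Integrability and Gaussian moments\<close>

lemma integrable_abs_bounded:
  fixes f g :: "'a \<Rightarrow> real"
  assumes "integrable M g" "f \<in> borel_measurable M" "\<And>x. \<bar>f x\<bar> \<le> g x"
  shows "integrable M f"
proof (rule Bochner_Integration.integrable_bound[OF assms(1,2)])
  show "AE x in M. norm (f x) \<le> norm (g x)"
    using assms(3) by (intro AE_I2) (metis abs_ge_self order_trans real_norm_def)
qed

lemma abs_mult_le_half_sum_squares: "\<bar>a * b\<bar> \<le> (a\<^sup>2 + b\<^sup>2) / 2" for a b :: real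
  using sum_squares_bound[of "\<bar>a\<bar>" "\<bar>b\<bar>"] by (simp add: abs_mult)

lemma integrable_mult_square_integrable:
  fixes f g :: "'a \<Rightarrow> real"
  assumes "f \<in> borel_measurable M" "g \<in> borel_measurable M"
    "integrable M (\<lambda>x. (f x)\<^sup>2)" "integrable M (\<lambda>x. (g x)\<^sup>2)"
  shows "integrable M (\<lambda>x. f x * g x)"
proof (rule integrable_abs_bounded)
  show "integrable M (\<lambda>x. ((f x)\<^sup>2 + (g x)\<^sup>2) / 2)"
    using assms(3,4) by simp
  show "(\<lambda>x. f x * g x) \<in> borel_measurable M"
    using assms(1,2) by simp
  show "\<bar>f x * g x\<bar> \<le> ((f x)\<^sup>2 + (g x)\<^sup>2) / 2" for x
    by (rule abs_mult_le_half_sum_squares)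
qed

lemma (in prob_space) normal_distributed_moments:
  assumes D: "distributed M lborel Y (\<lambda>x. ennreal (normal_density a b x))" and b: "b > 0"
  shows "integrable M Y" "integrable M (\<lambda>x. (Y x)\<^sup>2)" "expectation Y = a"
    "expectation (\<lambda>x. (Y x)\<^sup>2) = a\<^sup>2 + b\<^sup>2"
proof -
  show int1: "integrable M Y"
    using distributed_integrable[OF D, of "\<lambda>x. x"] integrable_normal_moment_nz_1[OF b] by simp
  have "integrable lborel
      (\<lambda>x. normal_density a b x * (x - a)\<^sup>2 + 2 * a * (normal_density a b x * x) - a\<^sup>2 * normal_density a b x)"
    by (intro Bochner_Integration.integrable_diff Bochner_Integration.integrable_add integrable_mult_right
        integrable_normal_moment[OF b] integrable_normal_moment_nz_1[OF b] integrable_normal_density[OF b])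
  also have "(\<lambda>x. normal_density a b x * (x - a)\<^sup>2 + 2 * a * (normal_density a b x * x) - a\<^sup>2 * normal_density a b x)
      = (\<lambda>x. normal_density a b x * x\<^sup>2)"
    by (simp add: fun_eq_iff power2_eq_square algebra_simps)
  finally have "integrable lborel (\<lambda>x. normal_density a b x * x\<^sup>2)" .
  then show int2: "integrable M (\<lambda>x. (Y x)\<^sup>2)"
    using distributed_integrable[OF D, of "\<lambda>x. x\<^sup>2"] by simp
  show mean: "expectation Y = a"
    using normal_distributed_expectation[OF b D] .
  show "expectation (\<lambda>x. (Y x)\<^sup>2) = a\<^sup>2 + b\<^sup>2"
    using variance_eq[OF int1 int2] normal_distributed_variance[OF b D] mean by simp
qed

section \<open>Functions of disjoint groups of independent variables\<close>

definition depends_only_on :: "('i \<Rightarrow> 'a \<Rightarrow> real) \<Rightarrow> 'i set \<Rightarrow> ('a \<Rightarrow> real) \<Rightarrow> bool" where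
  "depends_only_on X A f \<longleftrightarrow>
     (\<exists>F \<in> borel_measurable (PiM A (\<lambda>_. borel)). \<forall>\<omega>. f \<omega> = F (\<lambda>i\<in>A. X i \<omega>))"

lemma depends_only_onI:
  "F \<in> borel_measurable (PiM A (\<lambda>_. borel)) \<Longrightarrow> (\<And>\<omega>. f \<omega> = F (\<lambda>i\<in>A. X i \<omega>)) \<Longrightarrow>
    depends_only_on X A f"
  unfolding depends_only_on_def by blast

lemma depends_only_on_label: "depends_only_on X {i} (X i)"
  by (rule depends_only_onI[of "\<lambda>x. x i"]) auto

lemma depends_only_on_mono:
  assumes "A \<subseteq> B" "depends_only_on X A f"
  shows "depends_only_on X B f"
proof -
  obtain F where F: "F \<in> borel_measurable (PiM A (\<lambda>_. borel))" "\<And>\<omega>. f \<omega> = F (\<lambda>i\<in>A. X i \<omega>)"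
    using assms(2) by (auto simp: depends_only_on_def)
  have "(\<lambda>x. F (restrict x A)) \<in> borel_measurable (PiM B (\<lambda>_. borel))"
    using measurable_compose[OF measurable_restrict_subset[OF assms(1)] F(1)] .
  moreover have "f \<omega> = F (restrict (\<lambda>i\<in>B. X i \<omega>) A)" for \<omega>
    using F(2) assms(1) by (simp add: Int_absorb1)
  ultimately show ?thesis
    by (rule depends_only_onI)
qed

lemma depends_only_on_compose:
  assumes "depends_only_on X A f" "h \<in> borel_measurable borel"
  shows "depends_only_on X A (\<lambda>\<omega>. h (f \<omega>))"
proof -
  obtain F where "F \<in> borel_measurable (PiM A (\<lambda>_. borel))" "\<And>\<omega>. f \<omega> = F (\<lambda>i\<in>A. X i \<omega>)"
    using assms(1) by (auto simp: depends_only_on_def)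
  then show ?thesis
    using assms(2) by (intro depends_only_onI[of "\<lambda>x. h (F x)"]) auto
qed

lemma depends_only_on_mult:
  assumes "depends_only_on X A f" "depends_only_on X A g"
  shows "depends_only_on X A (\<lambda>\<omega>. f \<omega> * g \<omega>)"
proof -
  obtain F G where "F \<in> borel_measurable (PiM A (\<lambda>_. borel))" "\<And>\<omega>. f \<omega> = F (\<lambda>i\<in>A. X i \<omega>)"
    "G \<in> borel_measurable (PiM A (\<lambda>_. borel))" "\<And>\<omega>. g \<omega> = G (\<lambda>i\<in>A. X i \<omega>)"
    using assms by (auto simp: depends_only_on_def)
  then show ?thesis
    by (intro depends_only_onI[of "\<lambda>x. F x * G x"]) auto
qed

context prob_space
begin

lemma depends_only_on_borel_measurable:
  assumes "indep_vars (\<lambda>_. borel) X I" "A \<subseteq> I" "depends_only_on X A f"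
  shows "f \<in> borel_measurable M"
proof -
  obtain F where F: "F \<in> borel_measurable (PiM A (\<lambda>_. borel))" "f = (\<lambda>\<omega>. F (\<lambda>i\<in>A. X i \<omega>))"
    using assms(3) by (auto simp: depends_only_on_def fun_eq_iff)
  show ?thesis
    using assms(1,2) unfolding F(2) indep_vars_def
    by (intro measurable_compose[OF measurable_restrict F(1)]) auto
qed

lemma indep_vars_depends_only_on_integral_mult:
  fixes X :: "'i \<Rightarrow> 'a \<Rightarrow> real"
  assumes indep: "indep_vars (\<lambda>_. borel) X I" and AB: "A \<inter> B = {}" "A \<subseteq> I" "B \<subseteq> I"
    and "depends_only_on X A f" "depends_only_on X B g" "integrable M f" "integrable M g"
  shows "integrable M (\<lambda>\<omega>. f \<omega> * g \<omega>)"
    and "expectation (\<lambda>\<omega>. f \<omega> * g \<omega>) = expectation f * expectation g"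
proof -
  obtain F G where F: "F \<in> borel_measurable (PiM A (\<lambda>_. borel))" "f = (\<lambda>\<omega>. F (\<lambda>i\<in>A. X i \<omega>))"
    and G: "G \<in> borel_measurable (PiM B (\<lambda>_. borel))" "g = (\<lambda>\<omega>. G (\<lambda>i\<in>B. X i \<omega>))"
    using assms(5,6) by (auto simp: depends_only_on_def fun_eq_iff)
  have "indep_var borel f borel g"
    using indep_var_compose[OF indep_var_restrict[OF indep AB] F(1) G(1)] F(2) G(2)
    by (simp add: comp_def)
  with assms(7,8) show "integrable M (\<lambda>\<omega>. f \<omega> * g \<omega>)"
    and "expectation (\<lambda>\<omega>. f \<omega> * g \<omega>) = expectation f * expectation g"
    by (simp_all add: indep_var_integrable indep_var_lebesgue_integral)
qed

lemma expectation_square_lin_comb: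
  fixes X :: "'i \<Rightarrow> 'a \<Rightarrow> real" and c :: "'i \<Rightarrow> real"
  assumes indep: "indep_vars (\<lambda>_. borel) X I" and J: "finite J" "J \<subseteq> I"
    and int: "\<And>j. j \<in> J \<Longrightarrow> integrable M (X j)"
    and int_sq: "\<And>j. j \<in> J \<Longrightarrow> integrable M (\<lambda>x. (X j x)\<^sup>2)"
  shows "integrable M (\<lambda>x. (\<Sum>j\<in>J. c j * X j x)\<^sup>2)"
    and "expectation (\<lambda>x. (\<Sum>j\<in>J. c j * X j x)\<^sup>2) =
       (\<Sum>j\<in>J. c j * expectation (X j))\<^sup>2 +
         (\<Sum>j\<in>J. (c j)\<^sup>2 * (expectation (\<lambda>x. (X j x)\<^sup>2) - (expectation (X j))\<^sup>2))"
proof -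
  have square: "(\<Sum>j\<in>J. c j * X j x)\<^sup>2 = (\<Sum>j\<in>J. \<Sum>l\<in>J. c j * c l * (X j x * X l x))" for x
    by (simp add: power2_eq_square sum_product algebra_simps)
  have cross: "integrable M (\<lambda>x. X j x * X l x) \<and>
      expectation (\<lambda>x. X j x * X l x) =
        expectation (X j) * expectation (X l) + (if j = l then expectation (\<lambda>x. (X j x)\<^sup>2) - (expectation (X j))\<^sup>2 else 0)"
    if "j \<in> J" "l \<in> J" for j l
  proof (cases "j = l")
    case True
    then show ?thesis
      using that int_sq by (simp add: power2_eq_square)
  next
    case False
    then show ?thesis
      using that J int indep_vars_depends_only_on_integral_mult[OF indep, of "{j}" "{l}" "X j" "X l"]
      by (auto simp: depends_only_on_label)
  qed
  have diagonal_sum: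
    "(\<Sum>j\<in>J. \<Sum>l\<in>J. c j * c l * (e j * e l + (if j = l then v j else 0))) =
       (\<Sum>j\<in>J. c j * e j)\<^sup>2 + (\<Sum>j\<in>J. (c j)\<^sup>2 * v j)" for e v :: "'i \<Rightarrow> real"
    using J(1) by (simp add: distrib_left sum.distrib power2_eq_square sum_product mult_ac
        if_distrib[of "(*) _"] cong: if_cong)
  show "integrable M (\<lambda>x. (\<Sum>j\<in>J. c j * X j x)\<^sup>2)"
    unfolding square using cross by auto
  have "expectation (\<lambda>x. (\<Sum>j\<in>J. c j * X j x)\<^sup>2) =
      (\<Sum>j\<in>J. \<Sum>l\<in>J. c j * c l * (expectation (X j) * expectation (X l) +
          (if j = l then expectation (\<lambda>x. (X j x)\<^sup>2) - (expectation (X j))\<^sup>2 else 0)))"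
    unfolding square using cross by (simp add: Bochner_Integration.integral_sum integrable_sum)
  also have "\<dots> = (\<Sum>j\<in>J. c j * expectation (X j))\<^sup>2 +
         (\<Sum>j\<in>J. (c j)\<^sup>2 * (expectation (\<lambda>x. (X j x)\<^sup>2) - (expectation (X j))\<^sup>2))"
    by (rule diagonal_sum)
  finally show "expectation (\<lambda>x. (\<Sum>j\<in>J. c j * X j x)\<^sup>2) =
       (\<Sum>j\<in>J. c j * expectation (X j))\<^sup>2 +
         (\<Sum>j\<in>J. (c j)\<^sup>2 * (expectation (\<lambda>x. (X j x)\<^sup>2) - (expectation (X j))\<^sup>2))" .
qed

end

section \<open>Decomposition of the completed-data estimators\<close>

definition sigma_hat :: "(rv_label \<Rightarrow> 'a \<Rightarrow> real) \<Rightarrow> nat \<Rightarrow> nat \<Rightarrow> 'a \<Rightarrow> real" where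
  "sigma_hat X nobs d \<omega> = sqrt (sigma2_hat X nobs d \<omega>)"

definition imp_noise_mean :: "(rv_label \<Rightarrow> 'a \<Rightarrow> real) \<Rightarrow> nat \<Rightarrow> nat \<Rightarrow> nat \<Rightarrow> 'a \<Rightarrow> real" where
  "imp_noise_mean X nobs nmis d \<omega> =
     (real nmis * X (ZPD d) \<omega> + (\<Sum>i\<in>{nobs..<nobs + nmis}. X (Zimp i d) \<omega>)) / real (nobs + nmis)"

definition imp_noise_sumsq :: "(rv_label \<Rightarrow> 'a \<Rightarrow> real) \<Rightarrow> nat \<Rightarrow> nat \<Rightarrow> nat \<Rightarrow> 'a \<Rightarrow> real" where
  "imp_noise_sumsq X nobs nmis d \<omega> = (\<Sum>i\<in>{nobs..<nobs + nmis}. (X (ZPD d) \<omega> + X (Zimp i d) \<omega>)\<^sup>2)"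

lemma sum_sq_dev_mean:
  fixes c :: "nat \<Rightarrow> real"
  assumes "N > 0"
  shows "(\<Sum>i<N. (c i - (\<Sum>j<N. c j) / N)\<^sup>2) = (\<Sum>i<N. (c i - y)\<^sup>2) - N * ((\<Sum>j<N. c j) / N - y)\<^sup>2"
proof -
  define a where "a = (\<Sum>j<N. c j) / N"
  have "(\<Sum>i<N. c i - a) = 0" using assms by (simp add: sum_subtractf a_def)
  moreover have "(\<Sum>i<N. (c i - y)\<^sup>2) = (\<Sum>i<N. (c i - a)\<^sup>2 + 2 * (a - y) * (c i - a) + (a - y)\<^sup>2)"
    by (rule sum.cong) (simp_all add: power2_eq_square algebra_simps)
  ultimately show ?thesis
    by (simp add: sum.distrib flip: sum_distrib_left a_def)
qed

lemma sum_split_observed_imputed: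
  fixes f :: "nat \<Rightarrow> 'b::comm_monoid_add"
  shows "(\<Sum>i<nobs + nmis. f i) = (\<Sum>i<nobs. f i) + (\<Sum>i\<in>{nobs..<nobs + nmis}. f i)"
  using sum.atLeastLessThan_concat[of 0 nobs "nobs + nmis" f] by (simp add: atLeast0LessThan)

lemma CSS_nonneg: "CSS X nobs \<omega> \<ge> 0"
  by (simp add: CSS_def sum_nonneg)

lemma CSS_eq_sum_squares:
  "nobs > 0 \<Longrightarrow> CSS X nobs \<omega> = (\<Sum>i<nobs. (X (Yobs i) \<omega>)\<^sup>2) - real nobs * (Ybar_obs X nobs \<omega>)\<^sup>2"
  using sum_sq_dev_mean[of nobs "\<lambda>i. X (Yobs i) \<omega>" 0] by (simp add: CSS_def Ybar_obs_def)

text \<open>Squaring the square root of \<open>CSS / U\<close> gives its absolute value; writing it as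
  \<open>CSS * \<bar>1 / U\<bar>\<close> makes the identity hold pointwise, without using that \<open>U > 0\<close> almost surely.\<close>
lemma sigma_hat_squared: "(sigma_hat X nobs d \<omega>)\<^sup>2 = CSS X nobs \<omega> * \<bar>1 / X (Uchi d) \<omega>\<bar>"
  using CSS_nonneg[of X nobs \<omega>]
  by (simp add: sigma_hat_def sigma2_hat_def power2_eq_square abs_mult)

lemma mu_SI_eq:
  assumes "nobs > 0"
  shows "mu_SI X nobs nmis d \<omega> = Ybar_obs X nobs \<omega> + sigma_hat X nobs d \<omega> * imp_noise_mean X nobs nmis d \<omega>"
proof -
  have "(\<Sum>i<nobs + nmis. Y_comp X nobs i d \<omega>) = (\<Sum>i<nobs. X (Yobs i) \<omega>) +
      (\<Sum>i\<in>{nobs..<nobs + nmis}. Ybar_obs X nobs \<omega> + sigma_hat X nobs d \<omega> * X (ZPD d) \<omega>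
         + sigma_hat X nobs d \<omega> * X (Zimp i d) \<omega>)"
    unfolding sum_split_observed_imputed by (simp add: Y_comp_def Y_imp_def mu_hat_def sigma_hat_def)
  also have "\<dots> = real (nobs + nmis) * Ybar_obs X nobs \<omega> + sigma_hat X nobs d \<omega> *
      (real nmis * X (ZPD d) \<omega> + (\<Sum>i\<in>{nobs..<nobs + nmis}. X (Zimp i d) \<omega>))"
    using assms by (simp add: Ybar_obs_def sum.distrib flip: sum_distrib_left) (simp add: field_simps)
  finally show ?thesis
    using assms by (simp add: mu_SI_def imp_noise_mean_def field_simps)
qed

lemma sigma2_SI_eq:
  assumes "nobs > 0"
  shows "sigma2_SI X nobs nmis d \<omega> =
    (CSS X nobs \<omega> + (sigma_hat X nobs d \<omega>)\<^sup>2 * imp_noise_sumsq X nobs nmis d \<omega>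
      - real (nobs + nmis) * (sigma_hat X nobs d \<omega> * imp_noise_mean X nobs nmis d \<omega>)\<^sup>2)
    / (real (nobs + nmis) - 1)"
proof -
  let ?c = "\<lambda>i. Y_comp X nobs i d \<omega>" and ?y = "Ybar_obs X nobs \<omega>"
  have "(\<Sum>i<nobs + nmis. (?c i - ?y)\<^sup>2) =
      CSS X nobs \<omega> + (sigma_hat X nobs d \<omega>)\<^sup>2 * imp_noise_sumsq X nobs nmis d \<omega>"
    unfolding sum_split_observed_imputed CSS_def imp_noise_sumsq_def sum_distrib_left
    by (intro arg_cong2[where f="(+)"] sum.cong)
      (simp_all add: Y_comp_def Y_imp_def mu_hat_def sigma_hat_def power2_eq_square algebra_simps)
  then show ?thesis
    using sum_sq_dev_mean[of "nobs + nmis" ?c ?y] assms mu_SI_eq[OF assms, of X nmis d \<omega>]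
    by (simp add: sigma2_SI_def mu_SI_def)
qed

lemma mu_MI_eq:
  assumes "nobs > 0" "D > 0"
  shows "mu_MI X nobs nmis D \<omega> =
    Ybar_obs X nobs \<omega> + (\<Sum>d<D. sigma_hat X nobs d \<omega> * imp_noise_mean X nobs nmis d \<omega>) / D"
  using assms by (simp add: mu_MI_def mu_SI_eq sum.distrib add_divide_distrib)

lemma between_imputation_sum_sq_eq:
  assumes "nobs > 0" "D > 0"
  shows "(\<Sum>d<D. (mu_SI X nobs nmis d \<omega> - mu_MI X nobs nmis D \<omega>)\<^sup>2) =
    (\<Sum>d<D. (sigma_hat X nobs d \<omega> * imp_noise_mean X nobs nmis d \<omega>)\<^sup>2)
      - (\<Sum>d<D. sigma_hat X nobs d \<omega> * imp_noise_mean X nobs nmis d \<omega>)\<^sup>2 / D"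
  using sum_sq_dev_mean[of D "\<lambda>d. sigma_hat X nobs d \<omega> * imp_noise_mean X nobs nmis d \<omega>" 0] assms
  by (simp add: mu_SI_eq mu_MI_eq power2_eq_square)

text \<open>Here \<open>P = nobs\<close>, \<open>N = n\<close>, \<open>q = nobs + \<nu> - 3\<close> and \<open>s = \<sigma>\<^sup>2\<close>, so that \<open>(P - 1) s / q\<close>
  is the mean of \<open>sigma_hat\<^sup>2\<close> and \<open>q - P + 1 = \<nu> - 2\<close>.\<close>
lemma rubin_bias_identities:
  fixes P N q s :: real
  assumes "P > 0" "q > 0" "N > 1"
  shows "((P - 1) * s + (P - 1) * s / q * (N - P)) / (N - 1) / N + (P - 1) * s / q * (N - P) / (P * N) - s / P
      = - s * ((N - P) * (N + P - 1) * (q - P + 1)) / ((N - 1) * N * P * q)"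
    and "- s * ((N - P) * (N + P - 1) * (q - P + 1)) / ((N - 1) * N * P * q)
      = (N + P - 1) / (N * P) * (((P - 1) * s + (P - 1) * s / q * (N - P)) / (N - 1) - s)"
  using assms by (simp_all add: field_simps)

section \<open>The posterior-draw imputation model\<close>

definition obs_labels :: "nat \<Rightarrow> rv_label set" where
  "obs_labels nobs = Yobs ` {..<nobs}"

definition imp_noise_labels :: "nat \<Rightarrow> nat \<Rightarrow> nat \<Rightarrow> rv_label set" where
  "imp_noise_labels nobs nmis d = insert (ZPD d) ((\<lambda>i. Zimp i d) ` {nobs..<nobs + nmis})"

lemma finite_obs_labels [simp]: "finite (obs_labels nobs)"
  by (simp add: obs_labels_def)

lemma finite_imp_noise_labels [simp]: "finite (imp_noise_labels nobs nmis d)"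
  by (simp add: imp_noise_labels_def)

text \<open>A point \<open>x\<close> of the product space, read as a family of random variables on the one-point
  space: a statistic evaluated at \<open>point_family x\<close> is that statistic as a function of the sample
  values \<open>x\<close>.\<close>
abbreviation point_family :: "(rv_label \<Rightarrow> real) \<Rightarrow> rv_label \<Rightarrow> unit \<Rightarrow> real" where
  "point_family x \<equiv> \<lambda>l _. x l"

lemma depends_only_on_Ybar_obs: "depends_only_on X (obs_labels nobs) (Ybar_obs X nobs)"
proof (rule depends_only_onI)
  show "(\<lambda>x. Ybar_obs (point_family x) nobs ()) \<in> borel_measurable (PiM (obs_labels nobs) (\<lambda>_. borel))"
    unfolding Ybar_obs_def obs_labels_def by measurable
  show "Ybar_obs X nobs \<omega> = Ybar_obs (point_family (\<lambda>l\<in>obs_labels nobs. X l \<omega>)) nobs ()" for \<omega>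
    by (auto simp: Ybar_obs_def obs_labels_def intro!: sum.cong arg_cong2[where f="(/)"])
qed

lemma depends_only_on_CSS: "depends_only_on X (obs_labels nobs) (CSS X nobs)"
proof (rule depends_only_onI)
  show "(\<lambda>x. CSS (point_family x) nobs ()) \<in> borel_measurable (PiM (obs_labels nobs) (\<lambda>_. borel))"
    unfolding CSS_def Ybar_obs_def obs_labels_def by measurable
  show "CSS X nobs \<omega> = CSS (point_family (\<lambda>l\<in>obs_labels nobs. X l \<omega>)) nobs ()" for \<omega>
    by (auto simp: CSS_def Ybar_obs_def obs_labels_def intro!: sum.cong arg_cong2[where f="(/)"])
qed

lemma depends_only_on_sigma_hat:
  "depends_only_on X (insert (Uchi d) (obs_labels nobs)) (sigma_hat X nobs d)"
proof (rule depends_only_onI)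
  let ?A = "insert (Uchi d) (obs_labels nobs)"
  show "(\<lambda>x. sigma_hat (point_family x) nobs d ()) \<in> borel_measurable (PiM ?A (\<lambda>_. borel))"
    unfolding sigma_hat_def sigma2_hat_def CSS_def Ybar_obs_def obs_labels_def by measurable
  show "sigma_hat X nobs d \<omega> = sigma_hat (point_family (\<lambda>l\<in>?A. X l \<omega>)) nobs d ()" for \<omega>
    by (auto simp: sigma_hat_def sigma2_hat_def CSS_def Ybar_obs_def obs_labels_def
        intro!: sum.cong arg_cong2[where f="(/)"])
qed

lemma depends_only_on_imp_noise_mean:
  "depends_only_on X (imp_noise_labels nobs nmis d) (imp_noise_mean X nobs nmis d)"
proof (rule depends_only_onI)
  let ?A = "imp_noise_labels nobs nmis d"
  show "(\<lambda>x. imp_noise_mean (point_family x) nobs nmis d ()) \<in> borel_measurable (PiM ?A (\<lambda>_. borel))"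
    unfolding imp_noise_mean_def imp_noise_labels_def by measurable
  show "imp_noise_mean X nobs nmis d \<omega> = imp_noise_mean (point_family (\<lambda>l\<in>?A. X l \<omega>)) nobs nmis d ()"
    for \<omega>
    by (auto simp: imp_noise_mean_def imp_noise_labels_def intro!: sum.cong arg_cong2[where f="(/)"])
qed

lemma depends_only_on_imp_noise_sumsq:
  "depends_only_on X (imp_noise_labels nobs nmis d) (imp_noise_sumsq X nobs nmis d)"
proof (rule depends_only_onI)
  let ?A = "imp_noise_labels nobs nmis d"
  show "(\<lambda>x. imp_noise_sumsq (point_family x) nobs nmis d ()) \<in> borel_measurable (PiM ?A (\<lambda>_. borel))"
    unfolding imp_noise_sumsq_def imp_noise_labels_def by measurable
  show "imp_noise_sumsq X nobs nmis d \<omega> = imp_noise_sumsq (point_family (\<lambda>l\<in>?A. X l \<omega>)) nobs nmis d ()"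
    for \<omega>
    by (auto simp: imp_noise_sumsq_def imp_noise_labels_def intro!: sum.cong)
qed

locale posterior_draw_imputation = prob_space M for M :: "'a measure" +
  fixes X :: "rv_label \<Rightarrow> 'a \<Rightarrow> real" and nobs nmis D :: nat and \<mu> \<sigma> \<nu> :: real
  assumes nobs: "nobs \<ge> 2" and nmis: "nmis \<ge> 1" and D: "D \<ge> 2" and \<sigma>: "\<sigma> > 0"
    and \<nu>: "real nobs + \<nu> > 3"
    and indep: "indep_vars (\<lambda>_. borel) X (rv_index nobs nmis D)"
    and distributed_Yobs: "\<And>i. i < nobs \<Longrightarrow>
      distributed M lborel (X (Yobs i)) (\<lambda>x. ennreal (normal_density \<mu> \<sigma> x))"
    and distributed_Uchi: "\<And>d. d < D \<Longrightarrow>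
      distributed M lborel (X (Uchi d)) (\<lambda>x. ennreal (chi_squared_density (\<nu> + real nobs - 1) x))"
    and distributed_ZPD: "\<And>d. d < D \<Longrightarrow>
      distributed M lborel (X (ZPD d)) (\<lambda>x. ennreal (normal_density 0 (1 / sqrt (real nobs)) x))"
    and distributed_Zimp: "\<And>i d. nobs \<le> i \<Longrightarrow> i < nobs + nmis \<Longrightarrow> d < D \<Longrightarrow>
      distributed M lborel (X (Zimp i d)) (\<lambda>x. ennreal (normal_density 0 1 x))"
begin

abbreviation "n \<equiv> nobs + nmis"

lemma nobs_pos: "nobs > 0"
  using nobs by simp

lemma D_pos: "D > 0"
  using D by simp

lemma obs_labels_subset: "obs_labels nobs \<subseteq> rv_index nobs nmis D"
  by (auto simp: obs_labels_def rv_index_def)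

lemma Uchi_mem: "d < D \<Longrightarrow> Uchi d \<in> rv_index nobs nmis D"
  by (simp add: rv_index_def)

lemma imp_noise_labels_subset: "d < D \<Longrightarrow> imp_noise_labels nobs nmis d \<subseteq> rv_index nobs nmis D"
  by (auto simp: imp_noise_labels_def rv_index_def)

lemma sigma_labels_subset: "d < D \<Longrightarrow> insert (Uchi d) (obs_labels nobs) \<subseteq> rv_index nobs nmis D"
  using obs_labels_subset Uchi_mem by simp

lemma moments_Yobs:
  assumes "i < nobs"
  shows "integrable M (X (Yobs i))" "integrable M (\<lambda>\<omega>. (X (Yobs i) \<omega>)\<^sup>2)"
    "expectation (X (Yobs i)) = \<mu>" "expectation (\<lambda>\<omega>. (X (Yobs i) \<omega>)\<^sup>2) = \<mu>\<^sup>2 + \<sigma>\<^sup>2"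
  using normal_distributed_moments[OF distributed_Yobs[OF assms] \<sigma>] by auto

lemma moments_ZPD:
  assumes "d < D"
  shows "integrable M (X (ZPD d))" "integrable M (\<lambda>\<omega>. (X (ZPD d) \<omega>)\<^sup>2)"
    "expectation (X (ZPD d)) = 0" "expectation (\<lambda>\<omega>. (X (ZPD d) \<omega>)\<^sup>2) = 1 / real nobs"
proof -
  have sd: "1 / sqrt (real nobs) > 0" using nobs_pos by simp
  show "integrable M (X (ZPD d))" "integrable M (\<lambda>\<omega>. (X (ZPD d) \<omega>)\<^sup>2)" "expectation (X (ZPD d)) = 0"
    "expectation (\<lambda>\<omega>. (X (ZPD d) \<omega>)\<^sup>2) = 1 / real nobs"
    using normal_distributed_moments[OF distributed_ZPD[OF assms] sd] by (auto simp: power_divide)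
qed

lemma moments_Zimp:
  assumes "nobs \<le> i" "i < n" "d < D"
  shows "integrable M (X (Zimp i d))" "integrable M (\<lambda>\<omega>. (X (Zimp i d) \<omega>)\<^sup>2)"
    "expectation (X (Zimp i d)) = 0" "expectation (\<lambda>\<omega>. (X (Zimp i d) \<omega>)\<^sup>2) = 1"
  using normal_distributed_moments[OF distributed_Zimp[OF assms] zero_less_one] by auto

lemma moments_inverse_Uchi:
  assumes "d < D"
  shows "integrable M (\<lambda>\<omega>. \<bar>1 / X (Uchi d) \<omega>\<bar>)"
    "expectation (\<lambda>\<omega>. \<bar>1 / X (Uchi d) \<omega>\<bar>) = 1 / (real nobs + \<nu> - 3)"
proof -
  let ?k = "\<nu> + real nobs - 1"
  have k: "?k > 2" using \<nu> by simp
  note chi = has_bochner_integral_chi_squared_inverse[OF k]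
  note distr = distributed_Uchi[OF assms]
  show "integrable M (\<lambda>\<omega>. \<bar>1 / X (Uchi d) \<omega>\<bar>)"
    using distributed_integrable[OF distr, of "\<lambda>x. \<bar>1 / x\<bar>"] chi k
    by (simp add: has_bochner_integral_iff chi_squared_density_nonneg)
  show "expectation (\<lambda>\<omega>. \<bar>1 / X (Uchi d) \<omega>\<bar>) = 1 / (real nobs + \<nu> - 3)"
    using distributed_integral[OF distr, of "\<lambda>x. \<bar>1 / x\<bar>"] chi k
    by (simp add: has_bochner_integral_iff chi_squared_density_nonneg algebra_simps)
qed

lemma Ybar_obs_lin_comb: "Ybar_obs X nobs \<omega> = (\<Sum>j\<in>obs_labels nobs. 1 / real nobs * X j \<omega>)"
  by (simp add: obs_labels_def Ybar_obs_def sum.reindex inj_on_def sum_divide_distrib)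

lemma moments_Ybar_obs:
  shows "integrable M (Ybar_obs X nobs)" "expectation (Ybar_obs X nobs) = \<mu>"
    "integrable M (\<lambda>\<omega>. (Ybar_obs X nobs \<omega>)\<^sup>2)"
    "expectation (\<lambda>\<omega>. (Ybar_obs X nobs \<omega>)\<^sup>2) = \<mu>\<^sup>2 + \<sigma>\<^sup>2 / real nobs"
proof -
  have Ybar: "Ybar_obs X nobs = (\<lambda>\<omega>. \<Sum>j\<in>obs_labels nobs. 1 / real nobs * X j \<omega>)"
    by (simp add: fun_eq_iff Ybar_obs_lin_comb)
  have moments: "integrable M (X j)" "integrable M (\<lambda>\<omega>. (X j \<omega>)\<^sup>2)"
    "expectation (X j) = \<mu>" "expectation (\<lambda>\<omega>. (X j \<omega>)\<^sup>2) = \<mu>\<^sup>2 + \<sigma>\<^sup>2"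
    if "j \<in> obs_labels nobs" for j
    using that moments_Yobs by (auto simp: obs_labels_def)
  have card: "card (obs_labels nobs) = nobs"
    by (simp add: obs_labels_def card_image inj_on_def)
  note square = expectation_square_lin_comb[OF indep _ obs_labels_subset, of "\<lambda>_. 1 / real nobs"]
  show "integrable M (Ybar_obs X nobs)" "integrable M (\<lambda>\<omega>. (Ybar_obs X nobs \<omega>)\<^sup>2)"
    unfolding Ybar using moments square(1) by (auto simp: obs_labels_def)
  show "expectation (Ybar_obs X nobs) = \<mu>"
    unfolding Ybar using moments nobs_pos by (simp add: Bochner_Integration.integral_sum card)
  have "expectation (\<lambda>\<omega>. (Ybar_obs X nobs \<omega>)\<^sup>2) =
      (\<Sum>j\<in>obs_labels nobs. 1 / real nobs * \<mu>)\<^sup>2 + (\<Sum>j\<in>obs_labels nobs. (1 / real nobs)\<^sup>2 * \<sigma>\<^sup>2)"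
    unfolding Ybar using moments square(2) by (simp add: obs_labels_def)
  also have "\<dots> = \<mu>\<^sup>2 + \<sigma>\<^sup>2 / real nobs"
    using nobs_pos by (simp add: card power2_eq_square)
  finally show "expectation (\<lambda>\<omega>. (Ybar_obs X nobs \<omega>)\<^sup>2) = \<mu>\<^sup>2 + \<sigma>\<^sup>2 / real nobs" .
qed

lemma moments_CSS: "integrable M (CSS X nobs)" "expectation (CSS X nobs) = (real nobs - 1) * \<sigma>\<^sup>2"
proof -
  have CSS: "CSS X nobs = (\<lambda>\<omega>. (\<Sum>i<nobs. (X (Yobs i) \<omega>)\<^sup>2) - real nobs * (Ybar_obs X nobs \<omega>)\<^sup>2)"
    by (rule ext) (rule CSS_eq_sum_squares[OF nobs_pos])
  show "integrable M (CSS X nobs)"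
    unfolding CSS
    by (intro Bochner_Integration.integrable_diff integrable_sum integrable_mult_right)
      (auto simp: moments_Yobs moments_Ybar_obs)
  have "expectation (CSS X nobs) =
      (\<Sum>i<nobs. expectation (\<lambda>\<omega>. (X (Yobs i) \<omega>)\<^sup>2)) - real nobs * (\<mu>\<^sup>2 + \<sigma>\<^sup>2 / real nobs)"
    unfolding CSS using moments_Yobs moments_Ybar_obs
    by (subst Bochner_Integration.integral_diff) (auto simp: Bochner_Integration.integral_sum)
  also have "\<dots> = real nobs * (\<mu>\<^sup>2 + \<sigma>\<^sup>2) - real nobs * (\<mu>\<^sup>2 + \<sigma>\<^sup>2 / real nobs)"
    using moments_Yobs by simp
  also have "\<dots> = (real nobs - 1) * \<sigma>\<^sup>2"
    using nobs_pos by (simp add: field_simps)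
  finally show "expectation (CSS X nobs) = (real nobs - 1) * \<sigma>\<^sup>2" .
qed

lemma moments_imp_noise_labels:
  assumes "d < D" "j \<in> imp_noise_labels nobs nmis d"
  shows "integrable M (X j)" "integrable M (\<lambda>\<omega>. (X j \<omega>)\<^sup>2)" "expectation (X j) = 0"
    "expectation (\<lambda>\<omega>. (X j \<omega>)\<^sup>2) = (if j = ZPD d then 1 / real nobs else 1)"
  using assms moments_ZPD[OF assms(1)] moments_Zimp by (auto simp: imp_noise_labels_def)

lemma imp_noise_mean_lin_comb:
  "imp_noise_mean X nobs nmis d \<omega> =
    (\<Sum>j\<in>imp_noise_labels nobs nmis d. (if j = ZPD d then real nmis / real n else 1 / real n) * X j \<omega>)"
proof -
  have "(\<Sum>j\<in>imp_noise_labels nobs nmis d. (if j = ZPD d then real nmis / real n else 1 / real n) * X j \<omega>)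
      = real nmis / real n * X (ZPD d) \<omega> + (\<Sum>i\<in>{nobs..<n}. 1 / real n * X (Zimp i d) \<omega>)"
    unfolding imp_noise_labels_def by (subst sum.insert) (auto simp: sum.reindex inj_on_def)
  then show ?thesis
    by (simp add: imp_noise_mean_def add_divide_distrib sum_divide_distrib)
qed

lemma moments_imp_noise_mean:
  assumes "d < D"
  shows "integrable M (imp_noise_mean X nobs nmis d)" "expectation (imp_noise_mean X nobs nmis d) = 0"
    "integrable M (\<lambda>\<omega>. (imp_noise_mean X nobs nmis d \<omega>)\<^sup>2)"
    "expectation (\<lambda>\<omega>. (imp_noise_mean X nobs nmis d \<omega>)\<^sup>2) = real nmis / (real nobs * real n)"
proof -
  let ?c = "\<lambda>j. if j = ZPD d then real nmis / real n else 1 / real n"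
  have W: "imp_noise_mean X nobs nmis d = (\<lambda>\<omega>. \<Sum>j\<in>imp_noise_labels nobs nmis d. ?c j * X j \<omega>)"
    by (simp add: fun_eq_iff imp_noise_mean_lin_comb)
  note moments = moments_imp_noise_labels[OF assms]
  note square = expectation_square_lin_comb[OF indep _ imp_noise_labels_subset[OF assms], of ?c]
  show "integrable M (imp_noise_mean X nobs nmis d)" "expectation (imp_noise_mean X nobs nmis d) = 0"
    unfolding W using moments by (auto simp: Bochner_Integration.integral_sum imp_noise_labels_def)
  show "integrable M (\<lambda>\<omega>. (imp_noise_mean X nobs nmis d \<omega>)\<^sup>2)"
    unfolding W using moments square(1) by (auto simp: imp_noise_labels_def)
  have "expectation (\<lambda>\<omega>. (imp_noise_mean X nobs nmis d \<omega>)\<^sup>2) =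
      (\<Sum>j\<in>imp_noise_labels nobs nmis d. (?c j)\<^sup>2 * (if j = ZPD d then 1 / real nobs else 1))"
    unfolding W using moments square(2) by (auto intro!: sum.cong)
  also have "\<dots> = (real nmis / real n)\<^sup>2 * (1 / real nobs) + (\<Sum>i\<in>{nobs..<n}. (1 / real n)\<^sup>2)"
    unfolding imp_noise_labels_def by (subst sum.insert) (auto simp: sum.reindex inj_on_def)
  also have "\<dots> = real nmis / (real nobs * real n)"
    using nobs_pos
    by (simp add: field_simps power2_eq_square del: of_nat_add) (simp add: algebra_simps)
  finally show "expectation (\<lambda>\<omega>. (imp_noise_mean X nobs nmis d \<omega>)\<^sup>2) = real nmis / (real nobs * real n)" .
qed

lemma moments_imp_noise_sumsq:
  assumes "d < D"
  shows "integrable M (imp_noise_sumsq X nobs nmis d)"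
    "expectation (imp_noise_sumsq X nobs nmis d) = real nmis * (1 / real nobs + 1)"
proof -
  have summand: "integrable M (\<lambda>\<omega>. (X (ZPD d) \<omega> + X (Zimp i d) \<omega>)\<^sup>2) \<and>
      expectation (\<lambda>\<omega>. (X (ZPD d) \<omega> + X (Zimp i d) \<omega>)\<^sup>2) = 1 / real nobs + 1"
    if "i \<in> {nobs..<n}" for i
  proof -
    let ?J = "{ZPD d, Zimp i d}"
    have J: "?J \<subseteq> imp_noise_labels nobs nmis d" using that by (auto simp: imp_noise_labels_def)
    have moments: "integrable M (X j) \<and> integrable M (\<lambda>\<omega>. (X j \<omega>)\<^sup>2) \<and> expectation (X j) = 0 \<and>
        expectation (\<lambda>\<omega>. (X j \<omega>)\<^sup>2) = (if j = ZPD d then 1 / real nobs else 1)" if "j \<in> ?J" for j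
      using moments_imp_noise_labels[OF assms] J that by blast
    show ?thesis
      using expectation_square_lin_comb[OF indep _ order_trans[OF J imp_noise_labels_subset[OF assms]],
          of "\<lambda>_. 1"] moments
      by simp
  qed
  moreover have "imp_noise_sumsq X nobs nmis d =
      (\<lambda>\<omega>. \<Sum>i\<in>{nobs..<n}. (X (ZPD d) \<omega> + X (Zimp i d) \<omega>)\<^sup>2)"
    by (simp add: fun_eq_iff imp_noise_sumsq_def)
  ultimately show "integrable M (imp_noise_sumsq X nobs nmis d)"
      "expectation (imp_noise_sumsq X nobs nmis d) = real nmis * (1 / real nobs + 1)"
    by (auto simp: Bochner_Integration.integral_sum)
qed

definition sigma2_hat_mean :: real where
  "sigma2_hat_mean = (real nobs - 1) * \<sigma>\<^sup>2 / (real nobs + \<nu> - 3)"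

lemma moments_sigma_hat_squared:
  assumes "d < D"
  shows "integrable M (\<lambda>\<omega>. (sigma_hat X nobs d \<omega>)\<^sup>2)"
    "expectation (\<lambda>\<omega>. (sigma_hat X nobs d \<omega>)\<^sup>2) = sigma2_hat_mean"
proof -
  have inverse: "depends_only_on X {Uchi d} (\<lambda>\<omega>. \<bar>1 / X (Uchi d) \<omega>\<bar>)"
    by (rule depends_only_on_compose[OF depends_only_on_label]) simp
  have labels: "obs_labels nobs \<inter> {Uchi d} = {}" "{Uchi d} \<subseteq> rv_index nobs nmis D"
    using Uchi_mem[OF assms] by (auto simp: obs_labels_def)
  note product = indep_vars_depends_only_on_integral_mult[OF indep labels(1) obs_labels_subset labels(2)
      depends_only_on_CSS inverse moments_CSS(1) moments_inverse_Uchi(1)[OF assms]]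
  show "integrable M (\<lambda>\<omega>. (sigma_hat X nobs d \<omega>)\<^sup>2)"
    unfolding sigma_hat_squared by (rule product(1))
  show "expectation (\<lambda>\<omega>. (sigma_hat X nobs d \<omega>)\<^sup>2) = sigma2_hat_mean"
    unfolding sigma_hat_squared product(2) moments_CSS(2) moments_inverse_Uchi(2)[OF assms]
    by (simp add: sigma2_hat_mean_def)
qed

lemma disjoint_sigma_imp_noise_labels:
  "insert (Uchi d) (obs_labels nobs) \<inter> imp_noise_labels nobs nmis d = {}"
  by (auto simp: obs_labels_def imp_noise_labels_def)

lemma integral_sigma_hat_squared_mult:
  assumes "d < D" "depends_only_on X (imp_noise_labels nobs nmis d) g" "integrable M g"
  shows "integrable M (\<lambda>\<omega>. (sigma_hat X nobs d \<omega>)\<^sup>2 * g \<omega>)"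
    "expectation (\<lambda>\<omega>. (sigma_hat X nobs d \<omega>)\<^sup>2 * g \<omega>) = sigma2_hat_mean * expectation g"
  using indep_vars_depends_only_on_integral_mult[OF indep disjoint_sigma_imp_noise_labels
      sigma_labels_subset[OF assms(1)] imp_noise_labels_subset[OF assms(1)]
      depends_only_on_compose[OF depends_only_on_sigma_hat, of "\<lambda>x. x\<^sup>2"] assms(2)
      moments_sigma_hat_squared(1)[OF assms(1)] assms(3)]
  by (simp_all add: moments_sigma_hat_squared(2)[OF assms(1)])

lemma integral_mult_imp_noise_mean:
  assumes "d < D" "A \<subseteq> rv_index nobs nmis D" "A \<inter> imp_noise_labels nobs nmis d = {}"
    "depends_only_on X A f" "integrable M f"
  shows "integrable M (\<lambda>\<omega>. f \<omega> * imp_noise_mean X nobs nmis d \<omega>)"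
    "expectation (\<lambda>\<omega>. f \<omega> * imp_noise_mean X nobs nmis d \<omega>) = 0"
  using indep_vars_depends_only_on_integral_mult[OF indep assms(3,2) imp_noise_labels_subset[OF assms(1)]
      assms(4) depends_only_on_imp_noise_mean assms(5) moments_imp_noise_mean(1)[OF assms(1)]]
  by (simp_all add: moments_imp_noise_mean(2)[OF assms(1)])

lemma integrable_sigma_hat:
  assumes "d < D"
  shows "integrable M (sigma_hat X nobs d)"
proof (rule integrable_abs_bounded)
  show "integrable M (\<lambda>\<omega>. ((sigma_hat X nobs d \<omega>)\<^sup>2 + 1\<^sup>2) / 2)"
    using moments_sigma_hat_squared(1)[OF assms] by simp
  show "sigma_hat X nobs d \<in> borel_measurable M"
    by (rule depends_only_on_borel_measurable[OF indep sigma_labels_subset[OF assms] depends_only_on_sigma_hat])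
  show "\<bar>sigma_hat X nobs d \<omega>\<bar> \<le> ((sigma_hat X nobs d \<omega>)\<^sup>2 + 1\<^sup>2) / 2" for \<omega>
    using abs_mult_le_half_sum_squares[of "sigma_hat X nobs d \<omega>" 1] by simp
qed

definition mean_shift_var :: real where
  "mean_shift_var = sigma2_hat_mean * real nmis / (real nobs * real n)"

abbreviation mean_shift :: "nat \<Rightarrow> 'a \<Rightarrow> real" where
  "mean_shift d \<omega> \<equiv> sigma_hat X nobs d \<omega> * imp_noise_mean X nobs nmis d \<omega>"

lemma borel_measurable_sigma_hat: "d < D \<Longrightarrow> sigma_hat X nobs d \<in> borel_measurable M"
  by (rule depends_only_on_borel_measurable[OF indep sigma_labels_subset depends_only_on_sigma_hat])

lemma integral_mean_shift:
  assumes "d < D"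
  shows "integrable M (mean_shift d)" "expectation (mean_shift d) = 0"
  using integral_mult_imp_noise_mean[OF assms sigma_labels_subset[OF assms] disjoint_sigma_imp_noise_labels
      depends_only_on_sigma_hat integrable_sigma_hat[OF assms]] by auto

lemma integral_Ybar_obs_mult_mean_shift:
  assumes "d < D"
  shows "integrable M (\<lambda>\<omega>. Ybar_obs X nobs \<omega> * mean_shift d \<omega>)"
    "expectation (\<lambda>\<omega>. Ybar_obs X nobs \<omega> * mean_shift d \<omega>) = 0"
proof -
  let ?A = "insert (Uchi d) (obs_labels nobs)"
  have "depends_only_on X ?A (\<lambda>\<omega>. Ybar_obs X nobs \<omega> * sigma_hat X nobs d \<omega>)"
    by (intro depends_only_on_mult depends_only_on_sigma_hat
        depends_only_on_mono[OF _ depends_only_on_Ybar_obs]) auto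
  moreover have "integrable M (\<lambda>\<omega>. Ybar_obs X nobs \<omega> * sigma_hat X nobs d \<omega>)"
    using depends_only_on_borel_measurable[OF indep obs_labels_subset depends_only_on_Ybar_obs]
      borel_measurable_sigma_hat[OF assms] moments_Ybar_obs moments_sigma_hat_squared[OF assms]
    by (intro integrable_mult_square_integrable) auto
  ultimately have "integrable M (\<lambda>\<omega>. Ybar_obs X nobs \<omega> * sigma_hat X nobs d \<omega> * imp_noise_mean X nobs nmis d \<omega>) \<and>
      expectation (\<lambda>\<omega>. Ybar_obs X nobs \<omega> * sigma_hat X nobs d \<omega> * imp_noise_mean X nobs nmis d \<omega>) = 0"
    using integral_mult_imp_noise_mean[OF assms sigma_labels_subset[OF assms] disjoint_sigma_imp_noise_labels]
    by simp
  then show "integrable M (\<lambda>\<omega>. Ybar_obs X nobs \<omega> * mean_shift d \<omega>)"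
    "expectation (\<lambda>\<omega>. Ybar_obs X nobs \<omega> * mean_shift d \<omega>) = 0"
    by (simp_all add: mult.assoc)
qed

lemma integral_mean_shift_squared:
  assumes "d < D"
  shows "integrable M (\<lambda>\<omega>. (mean_shift d \<omega>)\<^sup>2)"
    "expectation (\<lambda>\<omega>. (mean_shift d \<omega>)\<^sup>2) = mean_shift_var"
  using integral_sigma_hat_squared_mult[OF assms
      depends_only_on_compose[OF depends_only_on_imp_noise_mean, of "\<lambda>x. x\<^sup>2"]
      moments_imp_noise_mean(3)[OF assms]]
  by (simp_all add: power_mult_distrib moments_imp_noise_mean(4)[OF assms] mean_shift_var_def)

lemma integral_mean_shift_mult:
  assumes "d < D" "e < D"
  shows "integrable M (\<lambda>\<omega>. mean_shift d \<omega> * mean_shift e \<omega>)"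
    "expectation (\<lambda>\<omega>. mean_shift d \<omega> * mean_shift e \<omega>) =
      (if d = e then mean_shift_var else 0)"
proof -
  have "integrable M (\<lambda>\<omega>. mean_shift d \<omega> * mean_shift e \<omega>) \<and>
    expectation (\<lambda>\<omega>. mean_shift d \<omega> * mean_shift e \<omega>) =
      (if d = e then mean_shift_var else 0)"
  proof (cases "d = e")
    case True
    then show ?thesis
      using integral_mean_shift_squared[OF assms(1)] by (simp add: power2_eq_square)
  next
    case False
    let ?A = "insert (Uchi e) (insert (Uchi d) (obs_labels nobs) \<union> imp_noise_labels nobs nmis d)"
    let ?f = "\<lambda>\<omega>. mean_shift d \<omega> * sigma_hat X nobs e \<omega>"
    have A: "?A \<subseteq> rv_index nobs nmis D" "?A \<inter> imp_noise_labels nobs nmis e = {}"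
      using sigma_labels_subset[OF assms(1)] imp_noise_labels_subset[OF assms(1)] Uchi_mem[OF assms(2)] False
      by (auto simp: imp_noise_labels_def obs_labels_def)
    have dependence: "depends_only_on X ?A ?f"
      by (intro depends_only_on_mult depends_only_on_mono[OF _ depends_only_on_sigma_hat]
          depends_only_on_mono[OF _ depends_only_on_imp_noise_mean]) (auto simp: obs_labels_def)
    have integrable: "integrable M ?f"
      using depends_only_on_borel_measurable[OF indep imp_noise_labels_subset depends_only_on_imp_noise_mean]
        borel_measurable_sigma_hat assms integral_mean_shift_squared(1)[OF assms(1)]
        moments_sigma_hat_squared(1)[OF assms(2)]
      by (intro integrable_mult_square_integrable) auto
    note product = integral_mult_imp_noise_mean[OF assms(2) A dependence integrable]
    show ?thesis
      using product False by (simp add: ac_simps)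
  qed
  then show "integrable M (\<lambda>\<omega>. mean_shift d \<omega> * mean_shift e \<omega>)"
    "expectation (\<lambda>\<omega>. mean_shift d \<omega> * mean_shift e \<omega>) =
      (if d = e then mean_shift_var else 0)"
    by auto
qed

lemma moments_sum_mean_shift:
  shows "integrable M (\<lambda>\<omega>. \<Sum>d<D. mean_shift d \<omega>)" "expectation (\<lambda>\<omega>. \<Sum>d<D. mean_shift d \<omega>) = 0"
    "integrable M (\<lambda>\<omega>. (\<Sum>d<D. mean_shift d \<omega>)\<^sup>2)"
    "expectation (\<lambda>\<omega>. (\<Sum>d<D. mean_shift d \<omega>)\<^sup>2) = real D * mean_shift_var"
    "integrable M (\<lambda>\<omega>. \<Sum>d<D. (mean_shift d \<omega>)\<^sup>2)"
    "expectation (\<lambda>\<omega>. \<Sum>d<D. (mean_shift d \<omega>)\<^sup>2) = real D * mean_shift_var"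
proof -
  have square: "(\<Sum>d<D. mean_shift d \<omega>)\<^sup>2 = (\<Sum>d<D. \<Sum>e<D. mean_shift d \<omega> * mean_shift e \<omega>)" for \<omega>
    by (simp add: power2_eq_square sum_product)
  show "integrable M (\<lambda>\<omega>. \<Sum>d<D. mean_shift d \<omega>)" "expectation (\<lambda>\<omega>. \<Sum>d<D. mean_shift d \<omega>) = 0"
    using integral_mean_shift by (auto simp: Bochner_Integration.integral_sum)
  show "integrable M (\<lambda>\<omega>. (\<Sum>d<D. mean_shift d \<omega>)\<^sup>2)"
    unfolding square by (auto intro!: integral_mean_shift_mult(1))
  have "expectation (\<lambda>\<omega>. (\<Sum>d<D. mean_shift d \<omega>)\<^sup>2) =
      (\<Sum>d<D. \<Sum>e<D. expectation (\<lambda>\<omega>. mean_shift d \<omega> * mean_shift e \<omega>))"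
    unfolding square
    by (subst Bochner_Integration.integral_sum, fastforce intro!: integral_mean_shift_mult(1))
      (intro sum.cong refl, subst Bochner_Integration.integral_sum, auto intro!: integral_mean_shift_mult(1))
  also have "\<dots> = real D * mean_shift_var"
    by (simp add: integral_mean_shift_mult(2))
  finally show "expectation (\<lambda>\<omega>. (\<Sum>d<D. mean_shift d \<omega>)\<^sup>2) = real D * mean_shift_var" .
  show "integrable M (\<lambda>\<omega>. \<Sum>d<D. (mean_shift d \<omega>)\<^sup>2)"
    "expectation (\<lambda>\<omega>. \<Sum>d<D. (mean_shift d \<omega>)\<^sup>2) = real D * mean_shift_var"
    using integral_mean_shift_squared by (auto simp: Bochner_Integration.integral_sum)
qed

definition sigma2_SI_mean :: real where
  "sigma2_SI_mean = ((real nobs - 1) * \<sigma>\<^sup>2 + sigma2_hat_mean * real nmis) / (real n - 1)"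

lemma moments_sigma2_SI:
  assumes "d < D"
  shows "integrable M (sigma2_SI X nobs nmis d)" "expectation (sigma2_SI X nobs nmis d) = sigma2_SI_mean"
proof -
  have sigma2_SI: "sigma2_SI X nobs nmis d = (\<lambda>\<omega>. (CSS X nobs \<omega> +
      (sigma_hat X nobs d \<omega>)\<^sup>2 * imp_noise_sumsq X nobs nmis d \<omega> - real n * (mean_shift d \<omega>)\<^sup>2) / (real n - 1))"
    by (rule ext) (rule sigma2_SI_eq[OF nobs_pos])
  note imp_noise_sumsq = integral_sigma_hat_squared_mult[OF assms depends_only_on_imp_noise_sumsq
      moments_imp_noise_sumsq(1)[OF assms]]
  show "integrable M (sigma2_SI X nobs nmis d)"
    unfolding sigma2_SI
    using moments_CSS(1) imp_noise_sumsq(1) integral_mean_shift_squared(1)[OF assms] by simp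
  have "expectation (sigma2_SI X nobs nmis d) = ((real nobs - 1) * \<sigma>\<^sup>2 +
      sigma2_hat_mean * (real nmis * (1 / real nobs + 1)) - real n * mean_shift_var) / (real n - 1)"
    unfolding sigma2_SI
    using moments_CSS imp_noise_sumsq integral_mean_shift_squared[OF assms] moments_imp_noise_sumsq(2)[OF assms]
    by simp
  also have "real n * mean_shift_var = sigma2_hat_mean * real nmis / real nobs"
    using nobs_pos by (simp add: mean_shift_var_def)
  also have "((real nobs - 1) * \<sigma>\<^sup>2 + sigma2_hat_mean * (real nmis * (1 / real nobs + 1))
      - sigma2_hat_mean * real nmis / real nobs) / (real n - 1) = sigma2_SI_mean"
    by (simp add: sigma2_SI_mean_def algebra_simps add_divide_distrib)
  finally show "expectation (sigma2_SI X nobs nmis d) = sigma2_SI_mean" .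
qed

lemma moments_sigma2_MI:
  shows "integrable M (sigma2_MI X nobs nmis D)" "expectation (sigma2_MI X nobs nmis D) = sigma2_SI_mean"
proof -
  have sigma2_MI: "sigma2_MI X nobs nmis D = (\<lambda>\<omega>. (\<Sum>d<D. sigma2_SI X nobs nmis d \<omega>) / real D)"
    by (simp add: fun_eq_iff sigma2_MI_def)
  show "integrable M (sigma2_MI X nobs nmis D)"
    unfolding sigma2_MI using moments_sigma2_SI(1)
    by (intro integrable_divide_zero Bochner_Integration.integrable_sum) auto
  show "expectation (sigma2_MI X nobs nmis D) = sigma2_SI_mean"
    unfolding sigma2_MI using moments_sigma2_SI D_pos by (simp add: Bochner_Integration.integral_sum)
qed

lemma moments_V_Rubin:
  shows "integrable M (V_Rubin X nobs nmis D)"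
    "expectation (V_Rubin X nobs nmis D) = sigma2_SI_mean / real n + (real D + 1) / real D * mean_shift_var"
proof -
  have V: "V_Rubin X nobs nmis D = (\<lambda>\<omega>. sigma2_MI X nobs nmis D \<omega> / real n +
      (real D + 1) / (real D * (real D - 1)) *
        ((\<Sum>d<D. (mean_shift d \<omega>)\<^sup>2) - (\<Sum>d<D. mean_shift d \<omega>)\<^sup>2 / real D))"
    by (rule ext) (simp only: V_Rubin_def between_imputation_sum_sq_eq[OF nobs_pos D_pos])
  show "integrable M (V_Rubin X nobs nmis D)"
    unfolding V using moments_sigma2_MI(1) moments_sum_mean_shift by simp
  have "expectation (V_Rubin X nobs nmis D) = sigma2_SI_mean / real n +
      (real D + 1) / (real D * (real D - 1)) * (real D * mean_shift_var - real D * mean_shift_var / real D)"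
    unfolding V using moments_sigma2_MI moments_sum_mean_shift
    by simp
  also have "\<dots> = sigma2_SI_mean / real n + (real D + 1) / real D * mean_shift_var"
    using D by (simp add: field_simps)
  finally show "expectation (V_Rubin X nobs nmis D) =
      sigma2_SI_mean / real n + (real D + 1) / real D * mean_shift_var" .
qed

lemma moments_mu_MI:
  shows "integrable M (mu_MI X nobs nmis D)" "integrable M (\<lambda>\<omega>. (mu_MI X nobs nmis D \<omega>)\<^sup>2)"
    "variance (mu_MI X nobs nmis D) = \<sigma>\<^sup>2 / real nobs + mean_shift_var / real D"
proof -
  have mu_MI: "mu_MI X nobs nmis D = (\<lambda>\<omega>. Ybar_obs X nobs \<omega> + (\<Sum>d<D. mean_shift d \<omega>) / real D)"
    by (rule ext) (rule mu_MI_eq[OF nobs_pos D_pos])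
  have square: "(mu_MI X nobs nmis D \<omega>)\<^sup>2 = (Ybar_obs X nobs \<omega>)\<^sup>2 +
      2 / real D * (\<Sum>d<D. Ybar_obs X nobs \<omega> * mean_shift d \<omega>) + (\<Sum>d<D. mean_shift d \<omega>)\<^sup>2 / (real D)\<^sup>2" for \<omega>
    using D_pos by (simp add: mu_MI power2_eq_square sum_distrib_left field_simps)
  have cross: "integrable M (\<lambda>\<omega>. \<Sum>d<D. Ybar_obs X nobs \<omega> * mean_shift d \<omega>)"
    "expectation (\<lambda>\<omega>. \<Sum>d<D. Ybar_obs X nobs \<omega> * mean_shift d \<omega>) = 0"
    using integral_Ybar_obs_mult_mean_shift by (auto simp: Bochner_Integration.integral_sum)
  show int: "integrable M (mu_MI X nobs nmis D)" "integrable M (\<lambda>\<omega>. (mu_MI X nobs nmis D \<omega>)\<^sup>2)"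
    unfolding square using moments_Ybar_obs moments_sum_mean_shift cross by (simp_all add: mu_MI)
  have "expectation (mu_MI X nobs nmis D) = \<mu>"
    unfolding mu_MI using moments_Ybar_obs moments_sum_mean_shift by simp
  moreover have "expectation (\<lambda>\<omega>. (mu_MI X nobs nmis D \<omega>)\<^sup>2) =
      \<mu>\<^sup>2 + \<sigma>\<^sup>2 / real nobs + real D * mean_shift_var / (real D)\<^sup>2"
    unfolding square using moments_Ybar_obs moments_sum_mean_shift cross
    by simp
  ultimately show "variance (mu_MI X nobs nmis D) = \<sigma>\<^sup>2 / real nobs + mean_shift_var / real D"
    using variance_eq[OF int] D_pos by (simp add: power2_eq_square)
qed

lemma expectation_V_Rubin_minus_variance:
  "expectation (V_Rubin X nobs nmis D) - variance (mu_MI X nobs nmis D) =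
    sigma2_SI_mean / real n + mean_shift_var - \<sigma>\<^sup>2 / real nobs"
proof -
  have "(real D + 1) / real D * mean_shift_var = mean_shift_var + mean_shift_var / real D"
    using D_pos by (simp add: field_simps)
  then show ?thesis
    unfolding moments_V_Rubin(2) moments_mu_MI(3) by simp
qed

abbreviation rubin_bias :: real where
  "rubin_bias \<equiv> - \<sigma>\<^sup>2 * (real nmis * (real n + real nobs - 1) * (\<nu> - 2))
      / ((real n - 1) * real n * real nobs * (real nobs + \<nu> - 3))"

lemma rubin_bias_closed_form:
  "sigma2_SI_mean / real n + mean_shift_var - \<sigma>\<^sup>2 / real nobs = rubin_bias"
  and rubin_bias_eq_sigma2_bias:
  "rubin_bias = (real n + real nobs - 1) / (real n * real nobs) * (sigma2_SI_mean - \<sigma>\<^sup>2)"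
proof -
  have P: "real nobs > 0" and q: "real nobs + \<nu> - 3 > 0" and N: "real n > 1"
    using nobs nmis \<nu> by auto
  have m: "real nmis = real n - real nobs" and \<nu>2: "\<nu> - 2 = (real nobs + \<nu> - 3) - real nobs + 1"
    by simp_all
  note identities = rubin_bias_identities[OF P q N, of "\<sigma>\<^sup>2"]
  show "sigma2_SI_mean / real n + mean_shift_var - \<sigma>\<^sup>2 / real nobs = rubin_bias"
    unfolding sigma2_SI_mean_def mean_shift_var_def sigma2_hat_mean_def m \<nu>2 by (rule identities(1))
  show "rubin_bias = (real n + real nobs - 1) / (real n * real nobs) * (sigma2_SI_mean - \<sigma>\<^sup>2)"
    unfolding sigma2_SI_mean_def sigma2_hat_mean_def m \<nu>2 by (rule identities(2))
qed

lemma rubin_bias_eq_0_iff: "rubin_bias = 0 \<longleftrightarrow> \<nu> = 2"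
  using nobs nmis \<nu> \<sigma> by auto

end

theorem mainTheorem6:
  fixes M :: "'a measure" and X :: "rv_label \<Rightarrow> 'a \<Rightarrow> real"
    and nobs nmis D :: nat and \<mu> \<sigma> \<nu>prior :: real
  assumes "prob_space M"
    and "nobs \<ge> 2" and "nmis \<ge> 1" and "D \<ge> 2"
    and "\<sigma> > 0"
    and "real nobs + \<nu>prior > 3"
    and "prob_space.indep_vars M (\<lambda>_. borel) X (rv_index nobs nmis D)"
    and "\<And>i. i < nobs \<Longrightarrow>
           distributed M lborel (X (Yobs i)) (\<lambda>x. ennreal (normal_density \<mu> \<sigma> x))"
    and "\<And>d. d < D \<Longrightarrow>
           distributed M lborel (X (Uchi d))
             (\<lambda>x. ennreal (chi_squared_density (\<nu>prior + real nobs - 1) x))"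
    and "\<And>d. d < D \<Longrightarrow>
           distributed M lborel (X (ZPD d)) (\<lambda>x. ennreal (normal_density 0 (1 / sqrt (real nobs)) x))"
    and "\<And>i d. nobs \<le> i \<Longrightarrow> i < nobs + nmis \<Longrightarrow> d < D \<Longrightarrow>
           distributed M lborel (X (Zimp i d)) (\<lambda>x. ennreal (normal_density 0 1 x))"
  shows "integrable M (V_Rubin X nobs nmis D)
    \<and> integrable M (sigma2_MI X nobs nmis D)
    \<and> integrable M (\<lambda>\<omega>. (mu_MI X nobs nmis D \<omega>)\<^sup>2)
    \<and> prob_space.expectation M (V_Rubin X nobs nmis D)
        - prob_space.variance M (mu_MI X nobs nmis D)
      = - \<sigma>\<^sup>2 * (real nmis * (real (nobs + nmis) + real nobs - 1) * (\<nu>prior - 2))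
          / ((real (nobs + nmis) - 1) * real (nobs + nmis) * real nobs * (real nobs + \<nu>prior - 3))
    \<and> - \<sigma>\<^sup>2 * (real nmis * (real (nobs + nmis) + real nobs - 1) * (\<nu>prior - 2))
          / ((real (nobs + nmis) - 1) * real (nobs + nmis) * real nobs * (real nobs + \<nu>prior - 3))
      = (real (nobs + nmis) + real nobs - 1) / (real (nobs + nmis) * real nobs)
        * (prob_space.expectation M (sigma2_MI X nobs nmis D) - \<sigma>\<^sup>2)
    \<and> (prob_space.expectation M (V_Rubin X nobs nmis D)
         = prob_space.variance M (mu_MI X nobs nmis D) \<longleftrightarrow> \<nu>prior = 2)"
proof -
  interpret posterior_draw_imputation M X nobs nmis D \<mu> \<sigma> \<nu>prior
    using assms by (simp add: posterior_draw_imputation_def posterior_draw_imputation_axioms_def)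
  have bias: "expectation (V_Rubin X nobs nmis D) - variance (mu_MI X nobs nmis D) = rubin_bias"
    using expectation_V_Rubin_minus_variance rubin_bias_closed_form by simp
  show ?thesis
  proof (intro conjI)
    show "rubin_bias = (real n + real nobs - 1) / (real n * real nobs)
        * (expectation (sigma2_MI X nobs nmis D) - \<sigma>\<^sup>2)"
      unfolding moments_sigma2_MI(2) by (rule rubin_bias_eq_sigma2_bias)
    show "expectation (V_Rubin X nobs nmis D) = variance (mu_MI X nobs nmis D) \<longleftrightarrow> \<nu>prior = 2"
      using bias rubin_bias_eq_0_iff by linarith
  qed (use bias moments_V_Rubin(1) moments_sigma2_MI(1) moments_mu_MI(2) in simp_all)
qed

end
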